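(* Let $(X,\|\cdot\|)$ be a strictly convex two-dimensional real normed space with closed unit ball $B_X$ and unit sphere $S_X$. For every $z\in\operatorname{int}(B_X)\setminus\{0\}$ there exists exactly one unordered pair $\{x,x'\}\subset S_X$ such that $z=\tfrac12(x+x')$.
   Context: A norm is strictly convex if the unit sphere contains no nondegenerate line segment. *)

theory Defs
  imports "HOL-Analysis.Analysis"
begin

definition strictly_convex_norm :: "'a::real_normed_vector itself \<Rightarrow> bool" where
  "strictly_convex_norm _ \<longleftrightarrow>
     (\<forall>x y :: 'a. x \<noteq> y \<longrightarrow> \<not> closed_segment x y \<subseteq> sphere 0 1)"

end

theory Submission
  imports Defs
begin

text \<open>
  Strict convexity says that an open segment between two distinct points of the closed unit
  ball lies in the open ball.

  Existence: as \<open>x\<close> runs along a half-turn of unit vectors from \<open>sgn z\<close> to \<open>-sgn z\<close>,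
  the norm of \<open>2z - x\<close> moves from \<open>\<bar>2\<parallel>z\<parallel> - 1\<bar> \<le> 1\<close> to \<open>2\<parallel>z\<parallel> + 1 \<ge> 1\<close>, so by continuity
  some \<open>x\<close> has \<open>2z - x\<close> on the sphere too.

  Uniqueness: two such pairs are chords \<open>z \<plusminus> u\<close> and \<open>z \<plusminus> w\<close> of the sphere with common
  midpoint \<open>z \<noteq> 0\<close>. If \<open>w\<close> is parallel to \<open>u\<close>, the line through \<open>z\<close> would meet the sphere
  in more than two points. Otherwise \<open>z = a u + b w\<close>, and after swapping and reflecting
  \<open>\<bar>b\<bar> \<le> a\<close>. Since the ball is symmetric, \<open>-z \<plusminus> w\<close> lie on the sphere, so
  \<open>q = -z - (b/a) w\<close> lies in the ball; but \<open>(1 + 2a)(u - z) = 2a q + (z + u)\<close> exhibits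
  \<open>u - z\<close> as an interior point of a segment in the ball, contradicting \<open>\<parallel>u - z\<parallel> = 1\<close>.
\<close>

lemma norm_eq_one_if_segment_point_ge_one:
  fixes p q c :: "'a::real_normed_vector"
  assumes "c \<in> closed_segment p q" "c \<noteq> q" "norm p \<le> 1" "norm q \<le> 1" "1 \<le> norm c"
  shows "norm p = 1"
proof -
  obtain \<theta> where \<theta>: "0 \<le> \<theta>" "\<theta> < 1" and c: "c = (1 - \<theta>) *\<^sub>R p + \<theta> *\<^sub>R q"
    using assms(1,2) by (auto simp: in_segment less_eq_real_def)
  have "1 \<le> (1 - \<theta>) * norm p + \<theta> * norm q"
    using assms(5) norm_triangle_ineq[of "(1 - \<theta>) *\<^sub>R p" "\<theta> *\<^sub>R q"] \<theta> by (simp add: c)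
  also have "\<dots> \<le> (1 - \<theta>) * norm p + \<theta>"
    using assms(4) \<theta>(1) by (simp add: mult_left_le)
  finally have "(1 - \<theta>) * 1 \<le> (1 - \<theta>) * norm p" by simp
  then show ?thesis using assms(3) \<theta>(2) by simp
qed

lemma closed_segment_on_line:
  fixes a d :: "'a::real_vector"
  assumes "t \<in> closed_segment r s"
  shows "a + t *\<^sub>R d \<in> closed_segment (a + r *\<^sub>R d) (a + s *\<^sub>R d)"
proof -
  obtain u where u: "0 \<le> u" "u \<le> 1" and t: "t = (1 - u) * r + u * s"
    using assms by (auto simp: in_segment)
  have "a + t *\<^sub>R d = (1 - u) *\<^sub>R (a + r *\<^sub>R d) + u *\<^sub>R (a + s *\<^sub>R d)"
    unfolding t by (simp add: algebra_simps)
  then show ?thesis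
    using u by (auto simp: in_segment)
qed

lemma strictly_convex_norm_open_segment:
  fixes a b c :: "'a::real_normed_vector"
  assumes sc: "strictly_convex_norm TYPE('a)"
    and a: "norm a \<le> 1" and b: "norm b \<le> 1" and c: "c \<in> open_segment a b"
  shows "norm c < 1"
proof (rule ccontr)
  assume "\<not> norm c < 1"
  then have c1: "1 \<le> norm c" by simp
  define d where "d = b - a"
  obtain t where "a \<noteq> b" "0 < t" "t < 1" and ct: "c = a + t *\<^sub>R d"
    using c by (auto simp: in_segment d_def algebra_simps)
  have cab: "c \<in> closed_segment a b" "c \<noteq> a" "c \<noteq> b"
    using c by (auto simp: open_segment_def)
  \<comment> \<open>\<open>c\<close> lies between any \<open>m\<close> of the segment and an endpoint other than \<open>c\<close>\<close>
  have "closed_segment a b \<subseteq> sphere 0 1"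
  proof
    fix m assume m: "m \<in> closed_segment a b"
    then obtain s where "0 \<le> s" "s \<le> 1" and ms: "m = a + s *\<^sub>R d"
      by (auto simp: in_segment d_def algebra_simps)
    have "norm m \<le> 1"
      using closed_segment_subset[of a "cball 0 1" b] m a b by auto
    moreover have "norm m = 1"
    proof (cases "s \<le> t")
      case True
      then have "c \<in> closed_segment m b"
        using closed_segment_on_line[of t s 1 a d] \<open>t < 1\<close>
        by (simp add: ct ms d_def closed_segment_eq_real_ivl)
      then show ?thesis
        using norm_eq_one_if_segment_point_ge_one cab \<open>norm m \<le> 1\<close> b c1 by blast
    next
      case False
      then have "c \<in> closed_segment m a"
        using closed_segment_on_line[of t s 0 a d] \<open>0 < t\<close>
        by (simp add: ct ms closed_segment_eq_real_ivl)
      then show ?thesis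
        using norm_eq_one_if_segment_point_ge_one cab \<open>norm m \<le> 1\<close> a c1 by blast
    qed
    ultimately show "m \<in> sphere 0 1" by simp
  qed
  then show False
    using sc \<open>a \<noteq> b\<close> by (auto simp: strictly_convex_norm_def)
qed

lemma norm_add_scaleR_le_one:
  fixes p w :: "'a::real_normed_vector"
  assumes "norm (p + w) \<le> 1" "norm (p - w) \<le> 1" "\<bar>s\<bar> \<le> 1"
  shows "norm (p + s *\<^sub>R w) \<le> 1"
proof -
  have "p + s *\<^sub>R w \<in> closed_segment (p - w) (p + w)"
    using closed_segment_on_line[of s "-1" 1 p w] assms(3)
    by (simp add: closed_segment_eq_real_ivl abs_le_iff)
  also have "\<dots> \<subseteq> cball 0 1"
    using assms(1,2) by (intro closed_segment_subset) auto
  finally show ?thesis by simp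
qed

lemma strictly_convex_norm_chord_interior:
  fixes p w :: "'a::real_normed_vector"
  assumes sc: "strictly_convex_norm TYPE('a)"
    and "norm (p + w) = 1" "norm (p - w) = 1" "\<bar>s\<bar> < 1" "w \<noteq> 0"
  shows "norm (p + s *\<^sub>R w) < 1"
proof -
  have "p + s *\<^sub>R w \<in> closed_segment (p - w) (p + w)"
    using closed_segment_on_line[of s "-1" 1 p w] assms(4)
    by (simp add: closed_segment_eq_real_ivl abs_less_iff)
  moreover have "p + s *\<^sub>R w \<noteq> p - w" "p + s *\<^sub>R w \<noteq> p + w"
    using assms(4,5) scaleR_cancel_right[of s w 1] scaleR_cancel_right[of s w "-1"] by auto
  ultimately have "p + s *\<^sub>R w \<in> open_segment (p - w) (p + w)"
    by (simp add: open_segment_def)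
  from strictly_convex_norm_open_segment[OF sc _ _ this] show ?thesis
    using assms(2,3) by simp
qed

lemma strictly_convex_norm_line_meets_sphere:
  fixes p w :: "'a::real_normed_vector"
  assumes sc: "strictly_convex_norm TYPE('a)"
    and "norm (p + w) = 1" "norm (p - w) = 1"
    and "norm (p + c *\<^sub>R w) = 1" "norm (p - c *\<^sub>R w) = 1" "w \<noteq> 0"
  shows "\<bar>c\<bar> = 1"
proof (rule ccontr)
  assume "\<bar>c\<bar> \<noteq> 1"
  then consider "\<bar>c\<bar> < 1" | "\<bar>1 / c\<bar> < 1" "c \<noteq> 0"
    by (cases "\<bar>c\<bar> < 1") (auto simp: field_simps)
  then show False
  proof cases
    case 1
    then show False
      using strictly_convex_norm_chord_interior[OF sc, of p w c] assms by simp
  next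
    case 2
    then show False
      using strictly_convex_norm_chord_interior[OF sc, of p "c *\<^sub>R w" "1 / c"] assms by simp
  qed
qed

lemma strictly_convex_norm_crossing_chords:
  fixes z u w :: "'a::real_normed_vector"
  assumes sc: "strictly_convex_norm TYPE('a)"
    and zu: "norm (z + u) = 1" "norm (z - u) = 1"
    and zw: "norm (z + w) = 1" "norm (z - w) = 1"
    and z: "z \<noteq> 0" "z = a *\<^sub>R u + b *\<^sub>R w" and ba: "\<bar>b\<bar> \<le> a"
  shows False
proof -
  have a_pos: "0 < a" using z ba by (cases "a = 0") auto
  define q where "q = u - (1 + 1 / a) *\<^sub>R z"
  have q_eq: "q = -z + (- (b / a)) *\<^sub>R w"
    using a_pos by (simp add: q_def z(2) algebra_simps)
  have "norm (-z + w) \<le> 1" "norm (-z - w) \<le> 1"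
    using zw norm_minus_cancel[of "z + w"] by (simp_all add: norm_minus_commute)
  moreover have "\<bar>- (b / a)\<bar> \<le> 1"
    using ba a_pos by simp
  ultimately have q_ball: "norm q \<le> 1"
    unfolding q_eq by (rule norm_add_scaleR_le_one)
  define l where "l = 1 / (1 + 2 * a)"
  have "(1 - l) *\<^sub>R q + l *\<^sub>R (z + u) = ((1 - l) + l) *\<^sub>R u + (l - (1 - l) * (1 + 1 / a)) *\<^sub>R z"
    unfolding q_def by (simp add: algebra_simps) (metis scaleR_add_left mult_2_right)
  also have "l - (1 - l) * (1 + 1 / a) = -1"
    using a_pos by (simp add: l_def divide_simps)
  finally have "u - z = (1 - l) *\<^sub>R q + l *\<^sub>R (z + u)"
    by simp
  moreover have "q \<noteq> z + u"
  proof -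
    have "z + u - q = (2 + 1 / a) *\<^sub>R z"
      by (simp add: q_def algebra_simps scaleR_2)
    moreover have "0 < 2 + 1 / a"
      using a_pos by (simp add: add_pos_pos)
    ultimately show ?thesis
      using z(1) by auto
  qed
  moreover have "0 < l" "l < 1"
    using a_pos by (simp_all add: l_def)
  ultimately have "u - z \<in> open_segment q (z + u)"
    by (auto simp: in_segment)
  from strictly_convex_norm_open_segment[OF sc q_ball _ this] show False
    using zu by (simp add: norm_minus_commute)
qed

lemma span_eq_UNIV_if_independent_card_eq_dim:
  fixes S :: "'a::real_vector set"
  assumes "independent S" "0 < card S" "card S = dim (UNIV :: 'a set)"
  shows "span S = UNIV"
proof -
  obtain B where SB: "S \<subseteq> B" and indep_B: "independent B" and "UNIV \<subseteq> span B"
    by (rule real_vector.maximal_independent_subset_extend[OF subset_UNIV assms(1)])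
  then have span_B: "span B = UNIV"
    by blast
  have "card B = card S"
    using real_vector.dim_eq_card[OF _ indep_B, of UNIV] span_B assms(3) by simp
  with assms(2) have "finite B"
    by (simp add: card_ge_0_finite)
  with SB \<open>card B = card S\<close> have "S = B"
    by (simp add: card_subset_eq)
  with span_B show ?thesis
    by simp
qed

lemma strictly_convex_norm_chords_common_midpoint:
  fixes z u w :: "'a::real_normed_vector"
  assumes sc: "strictly_convex_norm TYPE('a)" and dim2: "dim (UNIV :: 'a set) = 2"
    and z: "z \<noteq> 0" "norm z < 1"
    and zu: "norm (z + u) = 1" "norm (z - u) = 1"
    and zw: "norm (z + w) = 1" "norm (z - w) = 1"
  shows "w = u \<or> w = -u"
proof -
  have dominated: False
    if "norm (z + u') = 1" "norm (z - u') = 1" "norm (z + w') = 1" "norm (z - w') = 1"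
      and "z = a *\<^sub>R u' + b *\<^sub>R w'" "\<bar>b\<bar> \<le> \<bar>a\<bar>" for u' w' a b
  proof (cases "0 < a")
    case True
    then show False
      using strictly_convex_norm_crossing_chords[OF sc that(1-4) z(1) that(5)] that(6) by simp
  next
    case False
    then show False
      using strictly_convex_norm_crossing_chords[OF sc _ _ that(3,4) z(1), of "-u'" "-a" b] that
      by (simp add: add.commute)
  qed
  have "u \<noteq> 0"
    using z(2) zu by auto
  show ?thesis
  proof (cases "w \<in> span {u}")
    case True
    then obtain c where c: "w = c *\<^sub>R u"
      by (auto simp: span_singleton)
    have "\<bar>c\<bar> = 1"
      using strictly_convex_norm_line_meets_sphere[OF sc zu _ _ \<open>u \<noteq> 0\<close>] zw by (simp add: c)
    then show ?thesis
      using c by (cases "0 \<le> c") auto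
  next
    case False
    have "independent {u}"
      using independent_insertI[of u "{}"] \<open>u \<noteq> 0\<close> by auto
    with False have "independent {w, u}"
      by (rule independent_insertI)
    moreover have "w \<noteq> u"
      using False span_base[of u "{u}"] by auto
    ultimately have "span {w, u} = UNIV"
      using dim2 by (intro span_eq_UNIV_if_independent_card_eq_dim) auto
    then have "z \<in> span {w, u}" by simp
    then obtain j k where "z - k *\<^sub>R w - j *\<^sub>R u \<in> span {}"
      unfolding span_breakdown_eq by blast
    then have z_jk: "z = j *\<^sub>R u + k *\<^sub>R w" and z_kj: "z = k *\<^sub>R w + j *\<^sub>R u"
      by (simp_all add: algebra_simps)
    show ?thesis
    proof (cases "\<bar>k\<bar> \<le> \<bar>j\<bar>")
      case True
      then show ?thesis using dominated[OF zu zw z_jk] by blast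
    next
      case False
      then show ?thesis using dominated[OF zw zu z_kj] by simp
    qed
  qed
qed

lemma eq_reflection_if_midpoint:
  fixes x x' z :: "'a::real_vector"
  assumes "z = (1/2) *\<^sub>R (x + x')"
  shows "x' = z - (x - z)"
proof -
  have "x + x' = 2 *\<^sub>R z"
    using assms by simp
  then have "x' = 2 *\<^sub>R z - x"
    by (metis add_diff_cancel_left')
  then show ?thesis
    by (simp add: scaleR_2 algebra_simps)
qed

lemma unit_sphere_midpoint_pair_unique:
  fixes z x x' y y' :: "'a::real_normed_vector"
  assumes sc: "strictly_convex_norm TYPE('a)" and dim2: "dim (UNIV :: 'a set) = 2"
    and z: "z \<noteq> 0" "norm z < 1"
    and "norm x = 1" "norm x' = 1" "z = (1/2) *\<^sub>R (x + x')"
    and "norm y = 1" "norm y' = 1" "z = (1/2) *\<^sub>R (y + y')"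
  shows "{x, x'} = {y, y'}"
proof -
  have x': "x' = z - (x - z)" and y': "y' = z - (y - z)"
    using eq_reflection_if_midpoint assms(7,10) by blast+
  then have "y - z = x - z \<or> y - z = - (x - z)"
    using strictly_convex_norm_chords_common_midpoint[OF sc dim2 z, of "x - z" "y - z"] assms
    by simp
  then show ?thesis
  proof
    assume "y - z = x - z"
    then have "y = x" by simp
    then show ?thesis using x' y' by simp
  next
    assume opposite: "y - z = - (x - z)"
    have "y = z + (y - z)" by simp
    also have "\<dots> = x'" using opposite x' by simp
    finally have "y = x'" .
    moreover have "y' = x" using opposite y' by simp
    ultimately show ?thesis by auto
  qed
qed

lemma cos_sin_combination_nonzero:
  fixes z v :: "'a::real_vector"
  assumes "z \<noteq> 0" "v \<notin> span {z}"
  shows "cos t *\<^sub>R z + sin t *\<^sub>R v \<noteq> 0"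
proof
  assume combination: "cos t *\<^sub>R z + sin t *\<^sub>R v = 0"
  show False
  proof (cases "sin t = 0")
    case True
    then have "cos t \<noteq> 0"
      using sin_cos_squared_add[of t] by auto
    then show False
      using combination True assms(1) by simp
  next
    case False
    have "sin t *\<^sub>R (v - (- cos t / sin t) *\<^sub>R z) = 0"
      using combination False by (simp add: algebra_simps)
    then have "v = (- cos t / sin t) *\<^sub>R z"
      using False by (metis scaleR_eq_0_iff right_minus_eq)
    then show False
      using assms(2) by (metis span_base span_scale singletonI)
  qed
qed

lemma exists_unit_vector_with_unit_reflection:
  fixes z v :: "'a::real_normed_vector"
  assumes z: "z \<noteq> 0" "norm z < 1" and v: "v \<notin> span {z}"
  shows "\<exists>x. norm x = 1 \<and> norm (2 *\<^sub>R z - x) = 1"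
proof -
  define c where "c t = cos t *\<^sub>R z + sin t *\<^sub>R v" for t
  define g where "g t = norm (2 *\<^sub>R z - sgn (c t))" for t
  have c_nonzero: "c t \<noteq> 0" for t
    unfolding c_def using cos_sin_combination_nonzero[OF z(1) v] .
  have "continuous_on {0..pi} g"
    unfolding g_def c_def using c_nonzero[unfolded c_def]
    by (intro continuous_intros) auto
  moreover have "g 0 \<le> 1"
  proof -
    have "g 0 = norm ((2 - 1 / norm z) *\<^sub>R z)"
      by (simp add: g_def c_def sgn_div_norm algebra_simps inverse_eq_divide)
    also have "\<dots> = \<bar>2 * norm z - 1\<bar>"
      using z(1) by (simp add: abs_mult[symmetric] field_simps)
    finally show ?thesis
      using z(2) by (simp add: abs_le_iff)
  qed
  moreover have "1 \<le> g pi"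
  proof -
    have "g pi = norm ((2 + 1 / norm z) *\<^sub>R z)"
      by (simp add: g_def c_def sgn_div_norm algebra_simps inverse_eq_divide)
    also have "\<dots> = 2 * norm z + 1"
      using z(1) by (simp add: field_simps)
    finally show ?thesis
      by simp
  qed
  ultimately obtain t where "g t = 1"
    using IVT'[of g 0 1 pi] by auto
  then show ?thesis
    using c_nonzero[of t] by (auto simp: g_def norm_sgn)
qed

lemma norm_less_one_if_mem_interior_cball:
  fixes z :: "'a::real_normed_vector"
  assumes "z \<in> interior (cball 0 1)"
  shows "norm z < 1"
proof (cases "z = 0")
  case False
  obtain e where e: "0 < e" "ball z e \<subseteq> cball 0 1"
    using assms mem_interior by blast
  define p where "p = (1 + e / (2 * norm z)) *\<^sub>R z"
  have "dist z p = e / 2"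
    using False e(1) by (simp add: p_def dist_norm algebra_simps)
  then have "p \<in> ball z e"
    using e(1) by simp
  then have "norm p \<le> 1"
    using e(2) by auto
  moreover have "norm p = norm z + e / 2"
    using False e(1) by (simp add: p_def field_simps)
  ultimately show ?thesis
    using e(1) by simp
qed simp

theorem lemma2p8:
  fixes z :: "'a::real_normed_vector"
  assumes "dim (UNIV :: 'a set) = 2"
    and "strictly_convex_norm TYPE('a)"
    and "z \<in> interior (cball 0 1) - {0}"
  shows "\<exists>!P. \<exists>x x'. P = {x, x'} \<and> x \<in> sphere 0 1 \<and> x' \<in> sphere 0 1
                 \<and> z = (1/2) *\<^sub>R (x + x')"
proof (rule ex_ex1I)
  have z: "z \<noteq> 0" "norm z < 1"
    using assms(3) norm_less_one_if_mem_interior_cball by auto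
  obtain v where "v \<notin> span {z}"
    using dim_le_card[of UNIV "{z}"] assms(1) by force
  then obtain x where "norm x = 1" "norm (2 *\<^sub>R z - x) = 1"
    using exists_unit_vector_with_unit_reflection[OF z] by blast
  then show "\<exists>P x x'. P = {x, x'} \<and> x \<in> sphere 0 1 \<and> x' \<in> sphere 0 1
                 \<and> z = (1/2) *\<^sub>R (x + x')"
    by (intro exI[of _ "{x, 2 *\<^sub>R z - x}"] exI[of _ x] exI[of _ "2 *\<^sub>R z - x"]) auto
  show "P = Q"
    if P: "\<exists>x x'. P = {x, x'} \<and> x \<in> sphere 0 1 \<and> x' \<in> sphere 0 1 \<and> z = (1/2) *\<^sub>R (x + x')"
      and Q: "\<exists>x x'. Q = {x, x'} \<and> x \<in> sphere 0 1 \<and> x' \<in> sphere 0 1 \<and> z = (1/2) *\<^sub>R (x + x')"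
    for P Q
  proof -
    obtain x x' y y' where "P = {x, x'}" "norm x = 1" "norm x' = 1" "z = (1/2) *\<^sub>R (x + x')"
      and "Q = {y, y'}" "norm y = 1" "norm y' = 1" "z = (1/2) *\<^sub>R (y + y')"
      using P Q unfolding mem_sphere_0 by blast
    then show ?thesis
      using unit_sphere_midpoint_pair_unique[OF assms(2,1) z, of x x' y y'] by simp
  qed
qed

end
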